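(* Let $p$ be an odd prime. There is an isomorphism of $D_{2p}$-sets \[ \mathrm{Map}^{D_2}(D_{2p},\{a,b\})\cong *\amalg *\amalg\coprod_{i=1}^{2^{(p+1)/2}-2}D_{2p}/D_2\ \amalg\coprod_{i=1}^{\frac{2^{p-1}-1}{p}+1-2^{(p-1)/2}}D_{2p}.\]
   Context: $D_{2p}=\langle\tau,\zeta_p\mid\tau^2=\zeta_p^p=(\tau\zeta_p)^2=1\rangle$ is the dihedral group of order $2p$ and $D_2=\langle\tau\rangle$. $\{a,b\}$ is a two-element set with trivial $D_2$-action, and $\mathrm{Map}^{D_2}(D_{2p},\{a,b\})$ is the coinduced $D_{2p}$-set of $D_2$-equivariant maps $D_{2p}\to\{a,b\}$. *)

theory Defs
  imports "HOL-Computational_Algebra.Primes" "HOL-Library.FuncSet" "HOL-Algebra.Coset"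
begin

text \<open>Concrete dihedral group of order 2p: the pair (k, s) stands for
  zeta^k tau^(if s then 1 else 0), with 0 <= k < p. Multiplication:
  zeta^k tau^s zeta^l tau^t = zeta^(k + (-1)^s l) tau^(s+t).\<close>
definition dihedral :: "nat \<Rightarrow> (nat \<times> bool) monoid" where
  "dihedral p = \<lparr> carrier = {0..<p} \<times> (UNIV :: bool set),
     mult = (\<lambda>(k, s) (l, t). ((k + (if s then p - l else l)) mod p, s \<noteq> t)),
     one = (0, False) \<rparr>"

definition dih_tau :: "nat \<times> bool" where "dih_tau = (0, True)"
definition dih_zeta :: "nat \<times> bool" where "dih_zeta = (1, False)"

definition D2 :: "(nat \<times> bool) set" where "D2 = {(0, False), dih_tau}"

text \<open>Coinduced D_{2p}-set Map^{D_2}(D_{2p},{a,b}): D_2-equivariant maps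
  (D_2 acting on D_{2p} by left multiplication, trivially on {a,b}), i.e.
  f(tau g) = f(g); modelled as extensional functions on the carrier.\<close>
definition coind_set :: "nat \<Rightarrow> 'a \<Rightarrow> 'a \<Rightarrow> ((nat \<times> bool) \<Rightarrow> 'a) set" where
  "coind_set p a b = {f \<in> carrier (dihedral p) \<rightarrow>\<^sub>E {a, b}.
      \<forall>h \<in> D2. \<forall>g \<in> carrier (dihedral p). f (h \<otimes>\<^bsub>dihedral p\<^esub> g) = f g}"

definition coind_act :: "nat \<Rightarrow> (nat \<times> bool) \<Rightarrow> ((nat \<times> bool) \<Rightarrow> 'a) \<Rightarrow> ((nat \<times> bool) \<Rightarrow> 'a)" where
  "coind_act p h f = restrict (\<lambda>g. f (g \<otimes>\<^bsub>dihedral p\<^esub> h)) (carrier (dihedral p))"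

text \<open>Disjoint union  * + * + (N1 copies of D_{2p}/D_2) + (N2 copies of D_{2p}).\<close>
datatype 'g orbit_pt = Pt nat | Cos nat "'g set" | Free nat 'g

definition left_cosets_D2 :: "nat \<Rightarrow> (nat \<times> bool) set set" where
  "left_cosets_D2 p = {g <#\<^bsub>dihedral p\<^esub> D2 | g. g \<in> carrier (dihedral p)}"

definition coprod_set :: "nat \<Rightarrow> nat \<Rightarrow> nat \<Rightarrow> (nat \<times> bool) orbit_pt set" where
  "coprod_set p N1 N2 = {Pt 0, Pt 1}
     \<union> {Cos i C | i C. i < N1 \<and> C \<in> left_cosets_D2 p}
     \<union> {Free i g | i g. i < N2 \<and> g \<in> carrier (dihedral p)}"

fun coprod_act :: "nat \<Rightarrow> (nat \<times> bool) \<Rightarrow> (nat \<times> bool) orbit_pt \<Rightarrow> (nat \<times> bool) orbit_pt" where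
  "coprod_act p h (Pt i) = Pt i"
| "coprod_act p h (Cos i C) = Cos i (h <#\<^bsub>dihedral p\<^esub> C)"
| "coprod_act p h (Free i g) = Free i (h \<otimes>\<^bsub>dihedral p\<^esub> g)"

end

theory Submission
  imports Defs "HOL-Number_Theory.Cong"
begin

text \<open>Rotations act freely on the non-constant maps because p is prime, so a point of
  Map^{D_2}(D_{2p}, {a, b}) has as stabilizer either the whole group (exactly the two constant maps),
  a subgroup of order two generated by a reflection, or the trivial group.  All reflections are
  conjugate to tau and the centralizer of tau is D_2, so each orbit of the second kind is a copy
  of D_{2p}/D_2 containing exactly one non-constant tau-fixed map.  A tau-fixed map is a function
  of the rotation index up to sign, which gives 2^((p+1)/2) - 2 such orbits; the number of free
  orbits then follows from |X| = 2^p.\<close>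

lemma dihedral_carrier: "carrier (dihedral p) = {0..<p} \<times> UNIV"
  by (simp add: dihedral_def)

lemma dihedral_mult:
  "(k, s) \<otimes>\<^bsub>dihedral p\<^esub> (l, t) = ((k + (if s then p - l else l)) mod p, s \<noteq> t)"
  by (simp add: dihedral_def)

lemma dihedral_one: "\<one>\<^bsub>dihedral p\<^esub> = (0, False)"
  by (simp add: dihedral_def)

lemma int_mod_add_reflected:
  assumes "l \<le> p"
  shows "int ((k + (if s then p - l else l)) mod p) = (int k + (if s then - int l else int l)) mod int p"
proof (cases s)
  case True
  have "int ((k + (p - l)) mod p) = ((int k - int l) + int p) mod int p"
    using assms by (simp add: of_nat_mod of_nat_diff algebra_simps)
  then show ?thesis using True by simp
qed (simp add: of_nat_mod)

lemma group_dihedral: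
  assumes "0 < p"
  shows "group (dihedral p)"
proof (rule groupI)
  fix x y z
  assume "x \<in> carrier (dihedral p)" "y \<in> carrier (dihedral p)" "z \<in> carrier (dihedral p)"
  then obtain k s l t m u where xyz: "x = (k, s)" "y = (l, t)" "z = (m, u)" "l < p" "m < p"
    by (auto simp: dihedral_carrier)
  let ?r = "\<lambda>s (l::int). if s then - l else l"
  have "int (fst (x \<otimes>\<^bsub>dihedral p\<^esub> y \<otimes>\<^bsub>dihedral p\<^esub> z))
      = (int k + ?r s (int l) + ?r (s \<noteq> t) (int m)) mod int p"
    using xyz assms
    by (simp only: dihedral_mult fst_conv int_mod_add_reflected less_imp_le
        mod_less_divisor[THEN less_imp_le]) (simp add: mod_add_left_eq)
  also have "\<dots> = (int k + ?r s ((int l + ?r t (int m)) mod int p)) mod int p"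
    by (cases s; cases t; simp add: mod_diff_right_eq mod_add_right_eq; simp add: algebra_simps)
  also have "\<dots> = int (fst (x \<otimes>\<^bsub>dihedral p\<^esub> (y \<otimes>\<^bsub>dihedral p\<^esub> z)))"
    using xyz assms
    by (simp only: dihedral_mult fst_conv int_mod_add_reflected less_imp_le
        mod_less_divisor[THEN less_imp_le] if_distrib[of int] if_distrib[of uminus])
  finally show "x \<otimes>\<^bsub>dihedral p\<^esub> y \<otimes>\<^bsub>dihedral p\<^esub> z = x \<otimes>\<^bsub>dihedral p\<^esub> (y \<otimes>\<^bsub>dihedral p\<^esub> z)"
    using xyz by (simp add: dihedral_mult) blast
next
  fix x assume "x \<in> carrier (dihedral p)"
  then obtain k s where x: "x = (k, s)" "k < p" by (auto simp: dihedral_carrier)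
  show "\<exists>y\<in>carrier (dihedral p). y \<otimes>\<^bsub>dihedral p\<^esub> x = \<one>\<^bsub>dihedral p\<^esub>"
    using x assms
    by (intro bexI[of _ "(if s then k else (p - k) mod p, s)"])
       (auto simp: dihedral_carrier dihedral_mult dihedral_one mod_add_left_eq)
qed (use assms in \<open>auto simp: dihedral_carrier dihedral_mult dihedral_one\<close>)

lemma neg_mod_neg_mod: "k < p \<Longrightarrow> (p - (p - k) mod p) mod p = (k :: nat)"
  by (cases "k = 0") simp_all

lemma card_restrict_comp_PiE:
  assumes "\<pi> ` A = B" "finite B"
  shows "card ((\<lambda>u. restrict (u \<circ> \<pi>) A) ` (B \<rightarrow>\<^sub>E C)) = card C ^ card B"
proof -
  have "inj_on (\<lambda>u. restrict (u \<circ> \<pi>) A) (B \<rightarrow>\<^sub>E C)"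
  proof (rule inj_onI)
    fix u v assume u: "u \<in> B \<rightarrow>\<^sub>E C" and v: "v \<in> B \<rightarrow>\<^sub>E C"
      and eq: "restrict (u \<circ> \<pi>) A = restrict (v \<circ> \<pi>) A"
    show "u = v"
    proof
      fix y show "u y = v y"
      proof (cases "y \<in> B")
        case True
        then obtain x where "x \<in> A" "y = \<pi> x" using assms(1) by blast
        then show ?thesis using fun_cong[OF eq, of x] by simp
      next
        case False
        then show ?thesis using PiE_arb[OF u False] PiE_arb[OF v False] by simp
      qed
    qed
  qed
  then show ?thesis using assms(2) by (simp add: card_image card_PiE)
qed

lemma inverse_equivariant_bij:
  assumes bij: "bij_betw \<phi> Y X"
    and closed: "\<And>y h. y \<in> Y \<Longrightarrow> h \<in> H \<Longrightarrow> \<beta> h y \<in> Y"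
    and equivariant: "\<And>y h. y \<in> Y \<Longrightarrow> h \<in> H \<Longrightarrow> \<phi> (\<beta> h y) = \<alpha> h (\<phi> y)"
  shows "\<exists>\<psi>. bij_betw \<psi> X Y \<and> (\<forall>h \<in> H. \<forall>x \<in> X. \<psi> (\<alpha> h x) = \<beta> h (\<psi> x))"
proof (intro exI conjI ballI)
  let ?\<psi> = "the_inv_into Y \<phi>"
  show "bij_betw ?\<psi> X Y" using bij by (rule bij_betw_the_inv_into)
  fix h x assume h: "h \<in> H" and x: "x \<in> X"
  have y: "?\<psi> x \<in> Y" using bij_betw_apply[OF bij_betw_the_inv_into[OF bij] x] .
  have "\<phi> (\<beta> h (?\<psi> x)) = \<alpha> h x"
    using equivariant[OF y h] f_the_inv_into_f_bij_betw[OF bij x] by simp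
  then show "?\<psi> (\<alpha> h x) = \<beta> h (?\<psi> x)"
    using the_inv_into_f_f[OF bij_betw_imp_inj_on[OF bij] closed[OF y h]] by simp
qed

lemma solve_orbit_count_equation:
  fixes p q n :: nat
  assumes p: "p = 2 * q + 1"
    and count: "2 ^ p = 2 + (2 ^ (q + 1) - 2) * p + n * (2 * p)"
  shows "n = (2 ^ (p - 1) - 1) div p + 1 - 2 ^ ((p - 1) div 2)"
proof -
  define A :: nat where "A = 2 ^ q"
  obtain B where B: "A = B + 1"
    unfolding A_def by (metis add.commute le_add_diff_inverse one_le_numeral one_le_power)
  have AA: "A * A = 2 ^ (p - 1)" using p by (simp add: A_def mult_2 power_add)
  have "2 ^ p = 2 * (A * A)" and "2 ^ (q + 1) - 2 = 2 * B"
    using p AA B by (simp_all add: A_def[symmetric])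
  then have "A * A = 1 + B * p + n * p" using count by simp
  then have "A * A - 1 = p * (B + n)" by (simp add: algebra_simps)
  moreover have "0 < p" using p by simp
  ultimately have "(A * A - 1) div p = B + n" by simp
  then have "n = (A * A - 1) div p + 1 - A" using B by simp
  moreover have "(p - 1) div 2 = q" using p by simp
  ultimately show ?thesis unfolding AA[symmetric] by (simp add: A_def[symmetric])
qed

locale coind_dihedral =
  fixes p :: nat and a b :: 'a
  assumes p_pos: "0 < p"
begin

sublocale dih: group "dihedral p"
  using p_pos by (rule group_dihedral)

abbreviation "D \<equiv> dihedral p"
abbreviation "G \<equiv> carrier D"
abbreviation "X \<equiv> coind_set p a b"
abbreviation act :: "nat \<times> bool \<Rightarrow> (nat \<times> bool \<Rightarrow> 'a) \<Rightarrow> nat \<times> bool \<Rightarrow> 'a" where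
  "act \<equiv> coind_act p"
abbreviation "L \<equiv> left_cosets_D2 p"

lemma carrierE:
  assumes "g \<in> G"
  obtains k s where "g = (k, s)" "k < p"
  using assms by (cases g) (auto simp: dihedral_carrier)

lemma tau_closed: "dih_tau \<in> G"
  using p_pos by (simp add: dihedral_carrier dih_tau_def)

lemma mult_tau_right: "k < p \<Longrightarrow> (k, s) \<otimes>\<^bsub>D\<^esub> dih_tau = (k, \<not> s)"
  by (simp add: dihedral_mult dih_tau_def)

lemma mult_tau_left: "dih_tau \<otimes>\<^bsub>D\<^esub> (k, s) = ((p - k) mod p, \<not> s)"
  by (simp add: dihedral_mult dih_tau_def)

lemma tau_ne_one: "dih_tau \<noteq> \<one>\<^bsub>D\<^esub>"
  by (simp add: dih_tau_def dihedral_one)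

lemma D2_eq: "D2 = {\<one>\<^bsub>D\<^esub>, dih_tau}"
  by (simp add: D2_def dihedral_one)

lemma subgroup_D2: "subgroup D2 D"
proof (rule dih.subgroupI)
  have tau_tau: "dih_tau \<otimes>\<^bsub>D\<^esub> dih_tau = \<one>\<^bsub>D\<^esub>"
    by (simp add: dihedral_mult dih_tau_def dihedral_one)
  then have "inv\<^bsub>D\<^esub> dih_tau = dih_tau"
    using tau_closed by (intro dih.inv_equality)
  then show "\<And>d. d \<in> D2 \<Longrightarrow> inv\<^bsub>D\<^esub> d \<in> D2"
    using tau_closed by (auto simp: D2_eq)
  show "\<And>d e. d \<in> D2 \<Longrightarrow> e \<in> D2 \<Longrightarrow> d \<otimes>\<^bsub>D\<^esub> e \<in> D2"
    using tau_closed tau_tau by (auto simp: D2_eq)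
qed (use tau_closed in \<open>auto simp: D2_eq\<close>)

lemma left_coset_D2_in: "g \<in> G \<Longrightarrow> g <#\<^bsub>D\<^esub> D2 \<in> L"
  unfolding left_cosets_D2_def by blast

lemma left_coset_D2_self: "g \<in> G \<Longrightarrow> g \<in> g <#\<^bsub>D\<^esub> D2"
  by (force simp: l_coset_def D2_eq)

lemma left_coset_D2_mem: "C \<in> L \<Longrightarrow> g \<in> C \<Longrightarrow> C = g <#\<^bsub>D\<^esub> D2"
  unfolding left_cosets_D2_def using dih.l_repr_independence[OF _ _ subgroup_D2] by blast

lemma left_cosets_D2_eq: "L = (\<lambda>k. {(k, False), (k, True)}) ` {0..<p}"
proof -
  have coset: "(k, s) <#\<^bsub>D\<^esub> D2 = {(k, False), (k, True)}" if "k < p" for k s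
    using that by (cases s) (auto simp: l_coset_def D2_eq mult_tau_right dihedral_mult dihedral_one)
  show ?thesis
    unfolding left_cosets_D2_def
    by (auto simp: dihedral_carrier coset image_iff) (metis coset mem_Sigma_iff UNIV_I)
qed

lemma card_left_cosets_D2: "card L = p"
  unfolding left_cosets_D2_eq by (subst card_image) (auto simp: inj_on_def)

lemma left_cosets_D2_subset: "C \<in> L \<Longrightarrow> C \<subseteq> G"
  unfolding left_cosets_D2_eq by (auto simp: dihedral_carrier)

lemma left_cosets_D2_nonempty: "C \<in> L \<Longrightarrow> C \<noteq> {}"
  unfolding left_cosets_D2_eq by auto

lemma left_coset_left_cosets_D2:
  assumes "h \<in> G" "C \<in> L"
  shows "h <#\<^bsub>D\<^esub> C \<in> L"
proof -
  obtain g where "g \<in> G" "C = g <#\<^bsub>D\<^esub> D2"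
    using assms(2) unfolding left_cosets_D2_def by blast
  then show ?thesis
    using assms(1) dih.lcos_m_assoc[OF subgroup.subset[OF subgroup_D2]] left_coset_D2_in by simp
qed

lemma coind_act_apply: "g \<in> G \<Longrightarrow> act h f g = f (g \<otimes>\<^bsub>D\<^esub> h)"
  by (simp add: coind_act_def)

lemma coind_act_undefined: "g \<notin> G \<Longrightarrow> act h f g = undefined"
  by (simp add: coind_act_def)

lemma coind_setD: "f \<in> X \<Longrightarrow> f \<in> G \<rightarrow>\<^sub>E {a, b}"
  by (simp add: coind_set_def)

lemma coind_set_invariant: "f \<in> X \<Longrightarrow> d \<in> D2 \<Longrightarrow> g \<in> G \<Longrightarrow> f (d \<otimes>\<^bsub>D\<^esub> g) = f g"
  by (simp add: coind_set_def)

lemma coind_setI: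
  assumes "\<And>g. g \<in> G \<Longrightarrow> \<phi> g \<in> {a, b}"
    and "\<And>k s. k < p \<Longrightarrow> \<phi> ((p - k) mod p, \<not> s) = \<phi> (k, s)"
  shows "restrict \<phi> G \<in> X"
  unfolding coind_set_def
proof (intro CollectI conjI ballI)
  show "restrict \<phi> G \<in> G \<rightarrow>\<^sub>E {a, b}" using assms(1) by auto
  fix d g assume d: "d \<in> D2" and g: "g \<in> G"
  then obtain k s where ks: "g = (k, s)" "k < p" by (auto elim: carrierE)
  have "d \<otimes>\<^bsub>D\<^esub> g \<in> G" using d g subgroup.mem_carrier[OF subgroup_D2] by blast
  then show "restrict \<phi> G (d \<otimes>\<^bsub>D\<^esub> g) = restrict \<phi> G g"
    using d g ks assms(2) by (auto simp: D2_eq mult_tau_left)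
qed

lemma coind_act_closed:
  assumes f: "f \<in> X" and h: "h \<in> G"
  shows "act h f \<in> X"
  unfolding coind_set_def
proof (intro CollectI conjI ballI)
  show "act h f \<in> G \<rightarrow>\<^sub>E {a, b}"
    using coind_setD[OF f] h by (auto simp: coind_act_def)
  fix d g assume d: "d \<in> D2" and g: "g \<in> G"
  then show "act h f (d \<otimes>\<^bsub>D\<^esub> g) = act h f g"
    using h coind_set_invariant[OF f d] subgroup.mem_carrier[OF subgroup_D2 d]
    by (simp add: coind_act_apply dih.m_assoc)
qed

lemma coind_act_one: "f \<in> X \<Longrightarrow> act \<one>\<^bsub>D\<^esub> f = f"
  using PiE_arb[OF coind_setD] by (fastforce simp: coind_act_def)

lemma coind_act_mult: "g \<in> G \<Longrightarrow> h \<in> G \<Longrightarrow> act h (act g f) = act (h \<otimes>\<^bsub>D\<^esub> g) f"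
  by (auto simp: coind_act_def dih.m_assoc)

lemma coind_act_inv_cancel: "f \<in> X \<Longrightarrow> h \<in> G \<Longrightarrow> act (inv\<^bsub>D\<^esub> h) (act h f) = f"
  by (simp add: coind_act_mult coind_act_one)

definition const_map :: "'a \<Rightarrow> nat \<times> bool \<Rightarrow> 'a" where
  "const_map c = restrict (\<lambda>_. c) G"

lemma const_map_mem: "c \<in> {a, b} \<Longrightarrow> const_map c \<in> X"
  unfolding const_map_def by (rule coind_setI) auto

lemma coind_act_const_map: "h \<in> G \<Longrightarrow> act h (const_map c) = const_map c"
  by (auto simp: coind_act_def const_map_def)

lemma coind_act_eq_const_map_iff:
  assumes "f \<in> X" "h \<in> G"
  shows "act h f = const_map c \<longleftrightarrow> f = const_map c"
  by (metis assms coind_act_const_map coind_act_inv_cancel dih.inv_closed)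

lemma coind_set_reflection: "f \<in> X \<Longrightarrow> k < p \<Longrightarrow> f (k, True) = f ((p - k) mod p, False)"
  using coind_set_invariant[of f dih_tau "(k, True)"]
  by (simp add: D2_def dihedral_carrier mult_tau_left)

text \<open>The right coset D_2 g, on which every map in X is constant, contains exactly one rotation,
  namely (rotation_index g, False).\<close>

definition rotation_index :: "nat \<times> bool \<Rightarrow> nat" where
  "rotation_index = (\<lambda>(k, s). if s then (p - k) mod p else k)"

lemma rotation_index_image: "rotation_index ` G = {0..<p}"
proof (intro equalityI subsetI)
  fix k assume "k \<in> {0..<p}"
  then show "k \<in> rotation_index ` G"
    by (intro image_eqI[of _ _ "(k, False)"]) (auto simp: rotation_index_def dihedral_carrier)
qed (use p_pos in \<open>auto simp: rotation_index_def dihedral_carrier\<close>)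

lemma rotation_index_less: "g \<in> G \<Longrightarrow> rotation_index g < p"
  using rotation_index_image by auto

lemma coind_set_apply_rotation_index:
  assumes "f \<in> X" "g \<in> G"
  shows "f g = f (rotation_index g, False)"
  using assms(2) by (cases rule: carrierE) (auto simp: rotation_index_def coind_set_reflection[OF assms(1)])

lemma coind_set_eq_image: "X = (\<lambda>u. restrict (u \<circ> rotation_index) G) ` ({0..<p} \<rightarrow>\<^sub>E {a, b})"
proof (intro equalityI subsetI)
  fix f assume f: "f \<in> X"
  let ?u = "restrict (\<lambda>k. f (k, False)) {0..<p}"
  have "f = restrict (?u \<circ> rotation_index) G"
  proof
    fix g show "f g = restrict (?u \<circ> rotation_index) G g"
      using coind_set_apply_rotation_index[OF f] rotation_index_image PiE_arb[OF coind_setD[OF f]]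
      by (cases "g \<in> G") auto
  qed
  moreover have "?u \<in> {0..<p} \<rightarrow>\<^sub>E {a, b}"
    using coind_setD[OF f] by (auto simp: dihedral_carrier)
  ultimately show "f \<in> (\<lambda>u. restrict (u \<circ> rotation_index) G) ` ({0..<p} \<rightarrow>\<^sub>E {a, b})"
    by blast
next
  fix f assume "f \<in> (\<lambda>u. restrict (u \<circ> rotation_index) G) ` ({0..<p} \<rightarrow>\<^sub>E {a, b})"
  then obtain u where u: "u \<in> {0..<p} \<rightarrow>\<^sub>E {a, b}" and f: "f = restrict (u \<circ> rotation_index) G"
    by blast
  show "f \<in> X" unfolding f
  proof (rule coind_setI)
    fix g assume "g \<in> G"
    then show "(u \<circ> rotation_index) g \<in> {a, b}"
      using u rotation_index_image by (auto intro: PiE_mem)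
  next
    fix k s assume "k < p"
    then show "(u \<circ> rotation_index) ((p - k) mod p, \<not> s) = (u \<circ> rotation_index) (k, s)"
      by (simp add: rotation_index_def neg_mod_neg_mod)
  qed
qed

lemma card_coind_set: "card X = card {a, b} ^ p"
  using card_restrict_comp_PiE[OF rotation_index_image] coind_set_eq_image by simp

lemma finite_coind_set: "finite X"
proof (rule finite_subset)
  show "X \<subseteq> G \<rightarrow>\<^sub>E {a, b}" using coind_setD by blast
  show "finite (G \<rightarrow>\<^sub>E {a, b})" by (simp add: dihedral_carrier finite_PiE)
qed

definition orbit :: "(nat \<times> bool \<Rightarrow> 'a) \<Rightarrow> (nat \<times> bool \<Rightarrow> 'a) set" where
  "orbit f = (\<lambda>g. act g f) ` G"

definition orbit_rep :: "(nat \<times> bool \<Rightarrow> 'a) \<Rightarrow> nat \<times> bool \<Rightarrow> 'a" where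
  "orbit_rep f = (SOME f'. f' \<in> orbit f)"

lemma orbit_act:
  assumes f: "f \<in> X" and h: "h \<in> G"
  shows "orbit (act h f) = orbit f"
proof
  show "orbit (act h f) \<subseteq> orbit f"
    using h by (auto simp: orbit_def coind_act_mult)
  show "orbit f \<subseteq> orbit (act h f)"
  proof
    fix f' assume "f' \<in> orbit f"
    then obtain g where g: "g \<in> G" "f' = act g f" by (auto simp: orbit_def)
    then have "f' = act (g \<otimes>\<^bsub>D\<^esub> inv\<^bsub>D\<^esub> h) (act h f)"
      using f h by (simp add: coind_act_mult dih.m_assoc coind_act_one)
    then show "f' \<in> orbit (act h f)" using g h by (auto simp: orbit_def)
  qed
qed

lemma orbit_rep_mem: "f \<in> X \<Longrightarrow> orbit_rep f \<in> orbit f"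
  unfolding orbit_rep_def orbit_def
  by (rule someI[of _ f]) (metis coind_act_one dih.one_closed image_eqI)

lemma coprod_set_cases:
  assumes "y \<in> coprod_set p N1 N2"
  obtains "y = Pt 0" | "y = Pt 1"
    | i C where "y = Cos i C" "i < N1" "C \<in> L"
    | i g where "y = Free i g" "i < N2" "g \<in> G"
  using assms by (auto simp: coprod_set_def)

lemma coprod_act_closed:
  assumes "y \<in> coprod_set p N1 N2" "h \<in> G"
  shows "coprod_act p h y \<in> coprod_set p N1 N2"
  using assms(1)
proof (cases rule: coprod_set_cases)
  case (3 i C)
  then show ?thesis using assms(2) left_coset_left_cosets_D2 unfolding coprod_set_def by auto
next
  case (4 i g)
  then have "coprod_act p h y = Free i (h \<otimes>\<^bsub>D\<^esub> g)" "h \<otimes>\<^bsub>D\<^esub> g \<in> G"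
    using assms(2) by simp_all
  then show ?thesis using 4 unfolding coprod_set_def by blast
qed (auto simp: coprod_set_def)

lemma card_coprod_set: "card (coprod_set p N1 N2) = 2 + N1 * p + N2 * (2 * p)"
proof -
  let ?C = "(\<lambda>(i, C). Cos i C) ` ({0..<N1} \<times> L)"
  let ?F = "(\<lambda>(i, g). Free i g) ` ({0..<N2} \<times> G)"
  have Y: "coprod_set p N1 N2 = {Pt 0, Pt 1} \<union> ?C \<union> ?F"
    unfolding coprod_set_def by force
  have "finite ?C" "finite ?F"
    by (simp_all add: left_cosets_D2_eq dihedral_carrier)
  moreover have "card ?C = N1 * p"
    by (subst card_image) (auto simp: inj_on_def card_cartesian_product card_left_cosets_D2)
  moreover have "card ?F = N2 * (2 * p)"
    by (subst card_image) (auto simp: inj_on_def card_cartesian_product dihedral_carrier)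
  ultimately show ?thesis
    unfolding Y by (subst card_Un_disjoint, force, force, force)+ auto
qed

end

locale coind_dihedral_odd_prime = coind_dihedral +
  assumes prime_p: "prime p" and odd_p: "odd p" and a_ne_b: "a \<noteq> b"
begin

definition q :: nat where "q = (p - 1) div 2"

lemma p_eq: "p = 2 * q + 1"
  using odd_p p_pos unfolding q_def by presburger

lemma const_map_ne: "const_map a \<noteq> const_map b"
proof
  assume "const_map a = const_map b"
  then have "const_map a \<one>\<^bsub>D\<^esub> = const_map b \<one>\<^bsub>D\<^esub>" by simp
  then show False using a_ne_b by (simp add: const_map_def)
qed

lemma const_map_if_const_on_rotations:
  assumes f: "f \<in> X" and const: "\<And>k. k < p \<Longrightarrow> f (k, False) = f (0, False)"
  shows "f \<in> {const_map a, const_map b}"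
proof -
  have "f = const_map (f (0, False))"
  proof
    fix g show "f g = const_map (f (0, False)) g"
      using coind_set_apply_rotation_index[OF f] const rotation_index_less PiE_arb[OF coind_setD[OF f]]
      by (cases "g \<in> G") (auto simp: const_map_def)
  qed
  moreover have "f (0, False) \<in> {a, b}"
    using PiE_mem[OF coind_setD[OF f]] p_pos by (simp add: dihedral_carrier)
  ultimately show ?thesis by auto
qed

lemma rotation_fixed_imp_const:
  assumes f: "f \<in> X" and m: "0 < m" "m < p" and fixed: "act (m, False) f = f"
  shows "f \<in> {const_map a, const_map b}"
proof (rule const_map_if_const_on_rotations[OF f])
  have step: "f ((k + m) mod p, False) = f (k, False)" if "k < p" for k
    using fun_cong[OF fixed, of "(k, False)"] that
    by (simp add: coind_act_apply dihedral_carrier dihedral_mult)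
  have multiples: "f ((j * m) mod p, False) = f (0, False)" for j
  proof (induction j)
    case (Suc j)
    have "(Suc j * m) mod p = ((j * m) mod p + m) mod p"
      by (metis mod_add_left_eq mult_Suc add.commute)
    then show ?case using step[of "(j * m) mod p"] Suc p_pos by simp
  qed simp
  fix k assume k: "k < p"
  have "coprime m p"
    using m prime_p by (metis coprime_commute nat_dvd_not_less prime_imp_coprime_nat)
  then obtain x where "[m * x = 1] (mod p)"
    using cong_solve_nat[of m p] by auto
  then have "[x * k * m = k] (mod p)"
    using cong_scalar_right[of "m * x" 1 p k] by (simp add: mult_ac)
  then have "(x * k * m) mod p = k"
    using k by (simp add: cong_def)
  then show "f (k, False) = f (0, False)"
    using multiples[of "x * k"] by simp
qed

text \<open>The conjugating element is the rotation by q m, a square root of the rotation by -m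
  because 2 q = -1 modulo p.\<close>

lemma reflection_conjugate_tau:
  assumes "m < p"
  shows "\<exists>g\<in>G. dih_tau \<otimes>\<^bsub>D\<^esub> g = g \<otimes>\<^bsub>D\<^esub> (m, True)"
proof -
  define c where "c = (q * m) mod p"
  have c: "c < p" using p_pos by (simp add: c_def)
  have "(2 * c + m) mod p = (2 * (q * m) + m) mod p"
    unfolding c_def by (metis mod_add_left_eq mod_mult_right_eq)
  also have "2 * (q * m) + m = p * m"
    by (subst p_eq) (simp add: algebra_simps)
  finally have "(p - c + c) mod p = (c + m + c) mod p"
    using c by (simp add: mult_2 add_ac)
  then have "[p - c = c + m] (mod p)"
    using cong_add_rcancel_nat[of "p - c" c "c + m" p] unfolding cong_def by blast
  then have "(p - c) mod p = (c + m) mod p"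
    by (simp only: cong_def)
  then show ?thesis
    using c by (intro bexI[of _ "(c, False)"]) (simp_all add: mult_tau_left dihedral_mult dihedral_carrier)
qed

lemma centralizer_tau:
  assumes g: "g \<in> G" and comm: "dih_tau \<otimes>\<^bsub>D\<^esub> g = g \<otimes>\<^bsub>D\<^esub> dih_tau"
  shows "g \<in> D2"
proof -
  obtain k s where ks: "g = (k, s)" "k < p" using g by (rule carrierE)
  then have reflected: "(p - k) mod p = k" using comm by (simp add: mult_tau_left mult_tau_right)
  have "k = 0"
  proof (rule ccontr)
    assume "k \<noteq> 0"
    then have "p = 2 * k" using reflected ks(2) by simp
    then show False using odd_p by simp
  qed
  then show ?thesis using ks by (cases s) (simp_all add: D2_def dih_tau_def)
qed

definition tau_fixed :: "(nat \<times> bool \<Rightarrow> 'a) set" where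
  "tau_fixed = {f \<in> X. act dih_tau f = f}"

lemma tau_fixed_apply:
  assumes f: "f \<in> tau_fixed" and k: "k < p"
  shows "f (k, s) = f (k, False)"
proof -
  have "act dih_tau f (k, False) = f (k, True)"
    using k by (simp add: coind_act_apply dihedral_carrier mult_tau_right)
  then show ?thesis using f by (cases s) (simp_all add: tau_fixed_def)
qed

lemma D2_fixes_tau_fixed: "f \<in> tau_fixed \<Longrightarrow> d \<in> D2 \<Longrightarrow> act d f = f"
  by (auto simp: tau_fixed_def D2_eq coind_act_one)

text \<open>The double coset D_2 g D_2, on which every tau-fixed map is constant, consists of the
  elements whose rotation part is plus or minus reflection_class g.\<close>

definition reflection_class :: "nat \<times> bool \<Rightarrow> nat" where
  "reflection_class = (\<lambda>(k, s). min k (p - k))"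

lemma reflection_class_image: "reflection_class ` G = {0..q}"
proof (intro equalityI subsetI)
  fix k assume "k \<in> {0..q}"
  then show "k \<in> reflection_class ` G"
    using p_eq by (intro image_eqI[of _ _ "(k, False)"]) (auto simp: reflection_class_def dihedral_carrier)
qed (use p_eq in \<open>auto simp: reflection_class_def dihedral_carrier\<close>)

lemma tau_fixed_apply_reflection_class:
  assumes f: "f \<in> tau_fixed" and g: "g \<in> G"
  shows "f g = f (reflection_class g, False)"
proof -
  obtain k s where ks: "g = (k, s)" "k < p" using g by (rule carrierE)
  have "f (k, False) = f (min k (p - k), False)"
  proof (cases "k \<le> q")
    case False
    then have "min k (p - k) = (p - k) mod p" using p_eq by (simp add: min_def)
    then show ?thesis
      using coind_set_reflection[of f k] tau_fixed_apply[OF f ks(2), of True] f ks(2)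
      by (simp add: tau_fixed_def)
  qed (use p_eq in simp)
  then show ?thesis using tau_fixed_apply[OF f ks(2)] ks by (simp add: reflection_class_def)
qed

lemma tau_fixed_eq_image:
  "tau_fixed = (\<lambda>u. restrict (u \<circ> reflection_class) G) ` ({0..q} \<rightarrow>\<^sub>E {a, b})"
proof (intro equalityI subsetI)
  fix f assume f: "f \<in> tau_fixed"
  then have fX: "f \<in> X" by (simp add: tau_fixed_def)
  let ?u = "restrict (\<lambda>k. f (k, False)) {0..q}"
  have "f = restrict (?u \<circ> reflection_class) G"
  proof
    fix g show "f g = restrict (?u \<circ> reflection_class) G g"
      using tau_fixed_apply_reflection_class[OF f] reflection_class_image PiE_arb[OF coind_setD[OF fX]]
      by (cases "g \<in> G") auto
  qed
  moreover have "?u \<in> {0..q} \<rightarrow>\<^sub>E {a, b}"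
    using coind_setD[OF fX] p_eq by (auto simp: dihedral_carrier)
  ultimately show "f \<in> (\<lambda>u. restrict (u \<circ> reflection_class) G) ` ({0..q} \<rightarrow>\<^sub>E {a, b})"
    by blast
next
  fix f assume "f \<in> (\<lambda>u. restrict (u \<circ> reflection_class) G) ` ({0..q} \<rightarrow>\<^sub>E {a, b})"
  then obtain u where u: "u \<in> {0..q} \<rightarrow>\<^sub>E {a, b}" and f: "f = restrict (u \<circ> reflection_class) G"
    by blast
  have fX: "f \<in> X" unfolding f
  proof (rule coind_setI)
    fix g assume "g \<in> G"
    then show "(u \<circ> reflection_class) g \<in> {a, b}"
      using u reflection_class_image by (auto intro: PiE_mem)
  next
    fix k s assume "k < p"
    then show "(u \<circ> reflection_class) ((p - k) mod p, \<not> s) = (u \<circ> reflection_class) (k, s)"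
      by (cases "k = 0") (auto simp: reflection_class_def min.commute)
  qed
  have "act dih_tau f = f"
  proof
    fix g show "act dih_tau f g = f g"
    proof (cases "g \<in> G")
      case True
      then obtain k s where "g = (k, s)" "k < p" by (rule carrierE)
      then show ?thesis
        by (simp add: f coind_act_apply dihedral_carrier mult_tau_right reflection_class_def)
    qed (simp add: f coind_act_undefined)
  qed
  then show "f \<in> tau_fixed" using fX by (simp add: tau_fixed_def)
qed

definition nonconst_tau_fixed :: "(nat \<times> bool \<Rightarrow> 'a) set" where
  "nonconst_tau_fixed = tau_fixed - {const_map a, const_map b}"

lemma card_nonconst_tau_fixed: "card nonconst_tau_fixed = 2 ^ ((p + 1) div 2) - 2"
proof -
  have "card tau_fixed = card {a, b} ^ (q + 1)"
    using card_restrict_comp_PiE[OF reflection_class_image] tau_fixed_eq_image by simp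
  moreover have "card {a, b} = 2" using a_ne_b by simp
  moreover have "{const_map a, const_map b} \<subseteq> tau_fixed"
    using const_map_mem coind_act_const_map[OF tau_closed] by (simp add: tau_fixed_def)
  moreover have "finite tau_fixed"
    using finite_coind_set by (simp add: tau_fixed_def)
  moreover have "(p + 1) div 2 = q + 1" using p_eq by simp
  ultimately show ?thesis
    using const_map_ne by (simp add: nonconst_tau_fixed_def card_Diff_subset)
qed

lemma stabilizer_nonconst_tau_fixed:
  assumes s: "s \<in> nonconst_tau_fixed" and h: "h \<in> G" and fixed: "act h s = s"
  shows "h \<in> D2"
proof -
  have sX: "s \<in> X" and s_tau: "act dih_tau s = s"
    using s by (auto simp: nonconst_tau_fixed_def tau_fixed_def)
  obtain m t where mt: "h = (m, t)" "m < p" using h by (rule carrierE)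
  have "act (m, False) s = s"
  proof (cases t)
    case True
    then have "(m, False) = h \<otimes>\<^bsub>D\<^esub> dih_tau" using mt by (simp add: mult_tau_right)
    then show ?thesis using fixed s_tau coind_act_mult[OF tau_closed h] by metis
  qed (use mt fixed in simp)
  moreover have "s \<notin> {const_map a, const_map b}" using s by (simp add: nonconst_tau_fixed_def)
  ultimately have "\<not> 0 < m" using rotation_fixed_imp_const[OF sX _ mt(2)] by blast
  then have "m = 0" by simp
  then show "h \<in> D2" using mt by (cases t) (simp_all add: D2_def dih_tau_def)
qed

lemma nonconst_tau_fixed_orbit_unique:
  assumes s: "s \<in> nonconst_tau_fixed" and s': "s' \<in> nonconst_tau_fixed"
    and g: "g \<in> G" and moved: "act g s = s'"
  shows "s' = s"
proof -
  have sX: "s \<in> X" and s'_tau: "act dih_tau s' = s'"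
    using s s' by (auto simp: nonconst_tau_fixed_def tau_fixed_def)
  \<comment> \<open>The conjugate of tau by g fixes s, so it is tau itself and g centralizes tau.\<close>
  have conj_G: "inv\<^bsub>D\<^esub> g \<otimes>\<^bsub>D\<^esub> (dih_tau \<otimes>\<^bsub>D\<^esub> g) \<in> G"
    using g tau_closed by simp
  have "act (inv\<^bsub>D\<^esub> g \<otimes>\<^bsub>D\<^esub> (dih_tau \<otimes>\<^bsub>D\<^esub> g)) s = act (inv\<^bsub>D\<^esub> g) (act dih_tau (act g s))"
    using g tau_closed by (simp add: coind_act_mult)
  also have "\<dots> = s"
    using moved s'_tau coind_act_inv_cancel[OF sX g] by simp
  finally obtain d where d: "d \<in> D2" and conj: "dih_tau \<otimes>\<^bsub>D\<^esub> g = g \<otimes>\<^bsub>D\<^esub> d"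
    using stabilizer_nonconst_tau_fixed[OF s conj_G] g tau_closed subgroup.mem_carrier[OF subgroup_D2]
    by (metis dih.inv_solve_left dih.m_closed)
  have "d \<noteq> \<one>\<^bsub>D\<^esub>"
    using conj g tau_closed tau_ne_one by auto
  then have "g \<in> D2" using d conj D2_eq centralizer_tau[OF g] by auto
  then show ?thesis
    using moved s D2_fixes_tau_fixed by (auto simp: nonconst_tau_fixed_def)
qed

lemma coind_act_eq_iff_left_coset_D2:
  assumes s: "s \<in> nonconst_tau_fixed" and g: "g \<in> G" and g': "g' \<in> G"
  shows "act g s = act g' s \<longleftrightarrow> g <#\<^bsub>D\<^esub> D2 = g' <#\<^bsub>D\<^esub> D2"
proof
  have sX: "s \<in> X" using s by (simp add: nonconst_tau_fixed_def tau_fixed_def)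
  assume "act g s = act g' s"
  then have "act (inv\<^bsub>D\<^esub> g \<otimes>\<^bsub>D\<^esub> g') s = s"
    using g g' coind_act_inv_cancel[OF sX g] by (simp flip: coind_act_mult)
  then have "inv\<^bsub>D\<^esub> g \<otimes>\<^bsub>D\<^esub> g' \<in> D2"
    using stabilizer_nonconst_tau_fixed[OF s] g g' by simp
  moreover have "g' = g \<otimes>\<^bsub>D\<^esub> (inv\<^bsub>D\<^esub> g \<otimes>\<^bsub>D\<^esub> g')"
    using g g' by (simp add: dih.m_assoc[symmetric])
  ultimately have "g' \<in> g <#\<^bsub>D\<^esub> D2"
    unfolding l_coset_def by blast
  then show "g <#\<^bsub>D\<^esub> D2 = g' <#\<^bsub>D\<^esub> D2"
    using dih.l_repr_independence[OF _ g subgroup_D2] by blast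
next
  assume "g <#\<^bsub>D\<^esub> D2 = g' <#\<^bsub>D\<^esub> D2"
  then have "g' \<in> g <#\<^bsub>D\<^esub> D2" using left_coset_D2_self[OF g'] by simp
  then obtain d where "d \<in> D2" "g' = g \<otimes>\<^bsub>D\<^esub> d" unfolding l_coset_def by blast
  then show "act g s = act g' s"
    using coind_act_mult[of d g s] g subgroup.mem_carrier[OF subgroup_D2] D2_fixes_tau_fixed s
    by (simp add: nonconst_tau_fixed_def)
qed

definition coset_type :: "(nat \<times> bool \<Rightarrow> 'a) set" where
  "coset_type = {f \<in> X. \<exists>g\<in>G. act g f \<in> nonconst_tau_fixed}"

definition free_type :: "(nat \<times> bool \<Rightarrow> 'a) set" where
  "free_type = X - {const_map a, const_map b} - coset_type"

lemma const_map_notin_coset_type: "{const_map a, const_map b} \<inter> coset_type = {}"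
  by (auto simp: coset_type_def nonconst_tau_fixed_def coind_act_const_map)

lemma free_type_stabilizer:
  assumes f: "f \<in> free_type" and h: "h \<in> G" and fixed: "act h f = f"
  shows "h = \<one>\<^bsub>D\<^esub>"
proof -
  have fX: "f \<in> X" using f by (simp add: free_type_def)
  obtain m t where mt: "h = (m, t)" "m < p" using h by (rule carrierE)
  show ?thesis
  proof (cases t)
    case False
    then have "act (m, False) f = f" using mt fixed by simp
    moreover have "f \<notin> {const_map a, const_map b}" using f by (simp add: free_type_def)
    ultimately have "\<not> 0 < m" using rotation_fixed_imp_const[OF fX _ mt(2)] by blast
    then have "m = 0" by simp
    then show ?thesis using mt False by (simp add: dihedral_one)
  next
    case True
    then have "h = (m, True)" using mt by simp
    then obtain g where g: "g \<in> G" and conj: "dih_tau \<otimes>\<^bsub>D\<^esub> g = g \<otimes>\<^bsub>D\<^esub> h"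
      using reflection_conjugate_tau[OF mt(2)] by auto
    have "act dih_tau (act g f) = act (dih_tau \<otimes>\<^bsub>D\<^esub> g) f"
      by (rule coind_act_mult[OF g tau_closed])
    also have "\<dots> = act g (act h f)"
      using conj coind_act_mult[OF h g] by simp
    also have "\<dots> = act g f"
      using fixed by simp
    finally have "act dih_tau (act g f) = act g f" .
    moreover have "act g f \<notin> {const_map a, const_map b}"
      using f coind_act_eq_const_map_iff[OF fX g] by (auto simp: free_type_def)
    ultimately have "act g f \<in> nonconst_tau_fixed"
      using coind_act_closed[OF fX g] by (simp add: nonconst_tau_fixed_def tau_fixed_def)
    then show ?thesis using f g by (auto simp: free_type_def coset_type_def)
  qed
qed

lemma free_type_act_closed:
  assumes f: "f \<in> free_type" and h: "h \<in> G"
  shows "act h f \<in> free_type"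
proof -
  have fX: "f \<in> X" using f by (simp add: free_type_def)
  have "act h f \<notin> coset_type"
  proof
    assume "act h f \<in> coset_type"
    then obtain g where g: "g \<in> G" and s: "act g (act h f) \<in> nonconst_tau_fixed"
      by (auto simp: coset_type_def)
    then have "act (g \<otimes>\<^bsub>D\<^esub> h) f \<in> nonconst_tau_fixed" "g \<otimes>\<^bsub>D\<^esub> h \<in> G"
      using coind_act_mult[OF h g] h by simp_all
    then show False using f fX unfolding free_type_def coset_type_def by blast
  qed
  then show ?thesis
    using f coind_act_closed[OF fX h] coind_act_eq_const_map_iff[OF fX h] by (auto simp: free_type_def)
qed

definition free_reps :: "(nat \<times> bool \<Rightarrow> 'a) set" where
  "free_reps = {f \<in> free_type. orbit_rep f = f}"

lemma orbit_rep_free_reps: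
  assumes f: "f \<in> free_type"
  shows "orbit_rep f \<in> free_reps"
proof -
  have fX: "f \<in> X" using f by (simp add: free_type_def)
  obtain g where g: "g \<in> G" and rep: "orbit_rep f = act g f"
    using orbit_rep_mem[OF fX] by (auto simp: orbit_def)
  have "orbit_rep (orbit_rep f) = orbit_rep f"
    using orbit_act[OF fX g] rep by (simp add: orbit_rep_def)
  then show ?thesis using free_type_act_closed[OF f g] rep by (simp add: free_reps_def)
qed

lemma free_reps_orbit_unique:
  assumes r: "r \<in> free_reps" and r': "r' \<in> free_reps" and g: "g \<in> G" and moved: "act g r = r'"
  shows "r' = r"
proof -
  have "orbit r' = orbit r"
    using orbit_act[OF _ g, of r] r moved by (simp add: free_reps_def free_type_def)
  have "r' = orbit_rep r'" using r' by (simp add: free_reps_def)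
  also have "\<dots> = orbit_rep r" using \<open>orbit r' = orbit r\<close> by (simp add: orbit_rep_def)
  also have "\<dots> = r" using r by (simp add: free_reps_def)
  finally show ?thesis .
qed

end

locale coind_decomposition = coind_dihedral_odd_prime +
  fixes tau_enum free_enum :: "nat \<Rightarrow> nat \<times> bool \<Rightarrow> 'a" and N1 N2 :: nat
  assumes bij_tau_enum: "bij_betw tau_enum {0..<N1} nonconst_tau_fixed"
    and bij_free_enum: "bij_betw free_enum {0..<N2} free_reps"
begin

abbreviation "Y \<equiv> coprod_set p N1 N2"

definition embed :: "(nat \<times> bool) orbit_pt \<Rightarrow> nat \<times> bool \<Rightarrow> 'a" where
  "embed y = (case y of
      Pt n \<Rightarrow> if n = 0 then const_map a else const_map b
    | Cos i C \<Rightarrow> act (SOME g. g \<in> C) (tau_enum i)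
    | Free i g \<Rightarrow> act g (free_enum i))"

lemma tau_enum_mem: "i < N1 \<Longrightarrow> tau_enum i \<in> nonconst_tau_fixed"
  using bij_betwE[OF bij_tau_enum] by simp

lemma free_enum_mem: "i < N2 \<Longrightarrow> free_enum i \<in> free_reps"
  using bij_betwE[OF bij_free_enum] by simp

lemma embed_Cos:
  assumes i: "i < N1" and C: "C \<in> L" and g: "g \<in> C"
  shows "embed (Cos i C) = act g (tau_enum i)"
proof -
  have some: "(SOME g. g \<in> C) \<in> C"
    using left_cosets_D2_nonempty[OF C] by (simp add: some_in_eq)
  have "(SOME g. g \<in> C) <#\<^bsub>D\<^esub> D2 = g <#\<^bsub>D\<^esub> D2"
    using left_coset_D2_mem[OF C some] left_coset_D2_mem[OF C g] by simp
  moreover have "(SOME g. g \<in> C) \<in> G" "g \<in> G"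
    using some g left_cosets_D2_subset[OF C] by blast+
  ultimately have "act (SOME g. g \<in> C) (tau_enum i) = act g (tau_enum i)"
    using coind_act_eq_iff_left_coset_D2[OF tau_enum_mem[OF i]] by blast
  then show ?thesis by (simp add: embed_def)
qed

lemma bij_embed_points: "bij_betw embed {Pt 0, Pt 1} {const_map a, const_map b}"
  using const_map_ne by (auto simp: bij_betw_def embed_def)

lemma inj_on_embed_cosets: "inj_on embed {Cos i C | i C. i < N1 \<and> C \<in> L}"
proof (rule inj_onI)
  fix y y' assume "y \<in> {Cos i C | i C. i < N1 \<and> C \<in> L}" "y' \<in> {Cos i C | i C. i < N1 \<and> C \<in> L}"
    and eq: "embed y = embed y'"
  then obtain i C j C' where y: "y = Cos i C" "y' = Cos j C'"
    and i: "i < N1" "C \<in> L" and j: "j < N1" "C' \<in> L"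
    by blast
  obtain g g' where g: "g \<in> C" and g': "g' \<in> C'"
    using left_cosets_D2_nonempty[OF i(2)] left_cosets_D2_nonempty[OF j(2)] by blast
  have gG: "g \<in> G" and g'G: "g' \<in> G"
    using g g' left_cosets_D2_subset i j by blast+
  have moved: "act g (tau_enum i) = act g' (tau_enum j)"
    using eq embed_Cos[OF i g] embed_Cos[OF j g'] y by simp
  then have conj: "act (inv\<^bsub>D\<^esub> g' \<otimes>\<^bsub>D\<^esub> g) (tau_enum i) = tau_enum j"
    using coind_act_inv_cancel[OF _ g'G] tau_enum_mem[OF j(1)] gG g'G
    by (simp add: nonconst_tau_fixed_def tau_fixed_def flip: coind_act_mult)
  then have "tau_enum j = tau_enum i"
    using nonconst_tau_fixed_orbit_unique[OF tau_enum_mem[OF i(1)] tau_enum_mem[OF j(1)] _ conj]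
      gG g'G by simp
  then have ij: "i = j"
    using bij_betw_imp_inj_on[OF bij_tau_enum] i j by (simp add: inj_on_def)
  then have "g <#\<^bsub>D\<^esub> D2 = g' <#\<^bsub>D\<^esub> D2"
    using moved coind_act_eq_iff_left_coset_D2[OF tau_enum_mem[OF j(1)] gG g'G] by simp
  then show "y = y'"
    using ij y left_coset_D2_mem[OF i(2) g] left_coset_D2_mem[OF j(2) g'] by simp
qed

lemma embed_image_cosets: "embed ` {Cos i C | i C. i < N1 \<and> C \<in> L} = coset_type"
proof (intro equalityI subsetI)
  fix f assume "f \<in> embed ` {Cos i C | i C. i < N1 \<and> C \<in> L}"
  then obtain i C where i: "i < N1" "C \<in> L" and f: "f = embed (Cos i C)" by blast
  obtain g where g: "g \<in> C" using left_cosets_D2_nonempty[OF i(2)] by blast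
  have gG: "g \<in> G" using g left_cosets_D2_subset[OF i(2)] by blast
  have s: "tau_enum i \<in> nonconst_tau_fixed" using tau_enum_mem[OF i(1)] .
  then have sX: "tau_enum i \<in> X" by (simp add: nonconst_tau_fixed_def tau_fixed_def)
  have "f = act g (tau_enum i)" using f embed_Cos[OF i g] by simp
  then show "f \<in> coset_type"
    unfolding coset_type_def
    using coind_act_closed[OF sX gG] coind_act_inv_cancel[OF sX gG] s gG
    by (intro CollectI conjI bexI[of _ "inv\<^bsub>D\<^esub> g"]) simp_all
next
  fix f assume "f \<in> coset_type"
  then obtain g where f: "f \<in> X" and g: "g \<in> G" and s: "act g f \<in> nonconst_tau_fixed"
    by (auto simp: coset_type_def)
  have "act g f \<in> tau_enum ` {0..<N1}"
    using bij_betw_imp_surj_on[OF bij_tau_enum] s by simp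
  then obtain i where i: "i < N1" "tau_enum i = act g f" by auto
  have C: "inv\<^bsub>D\<^esub> g <#\<^bsub>D\<^esub> D2 \<in> L" using g by (simp add: left_coset_D2_in)
  have "embed (Cos i (inv\<^bsub>D\<^esub> g <#\<^bsub>D\<^esub> D2)) = f"
    using embed_Cos[OF i(1) C left_coset_D2_self] i(2) coind_act_inv_cancel[OF f g] g by simp
  then show "f \<in> embed ` {Cos i C | i C. i < N1 \<and> C \<in> L}"
    using i(1) C by blast
qed

lemma inj_on_embed_free: "inj_on embed {Free i g | i g. i < N2 \<and> g \<in> G}"
proof (rule inj_onI)
  fix y y' assume "y \<in> {Free i g | i g. i < N2 \<and> g \<in> G}" "y' \<in> {Free i g | i g. i < N2 \<and> g \<in> G}"
    and eq: "embed y = embed y'"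
  then obtain i g j g' where y: "y = Free i g" "y' = Free j g'"
    and i: "i < N2" "g \<in> G" and j: "j < N2" "g' \<in> G"
    by blast
  have r: "free_enum i \<in> free_reps" and r': "free_enum j \<in> free_reps"
    using free_enum_mem i j by auto
  have r'X: "free_enum j \<in> X"
    using r' by (simp add: free_reps_def free_type_def)
  have hG: "inv\<^bsub>D\<^esub> g' \<otimes>\<^bsub>D\<^esub> g \<in> G" using i j by simp
  have moved: "act (inv\<^bsub>D\<^esub> g' \<otimes>\<^bsub>D\<^esub> g) (free_enum i) = free_enum j"
    using eq coind_act_inv_cancel[OF r'X j(2)] i j y by (simp add: embed_def flip: coind_act_mult)
  then have same: "free_enum j = free_enum i"
    using free_reps_orbit_unique[OF r r' hG] by simp
  then have ij: "i = j"
    using bij_betw_imp_inj_on[OF bij_free_enum] i j by (simp add: inj_on_def)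
  have "free_enum i \<in> free_type" using r by (simp add: free_reps_def)
  then have "inv\<^bsub>D\<^esub> g' \<otimes>\<^bsub>D\<^esub> g = \<one>\<^bsub>D\<^esub>"
    using free_type_stabilizer[OF _ hG] moved same by simp
  then have "g = g'"
    using dih.inv_solve_left'[OF dih.one_closed j(2) i(2)] j(2) by simp
  then show "y = y'" using ij y by simp
qed

lemma embed_image_free: "embed ` {Free i g | i g. i < N2 \<and> g \<in> G} = free_type"
proof (intro equalityI subsetI)
  fix f assume "f \<in> embed ` {Free i g | i g. i < N2 \<and> g \<in> G}"
  then obtain i g where i: "i < N2" "g \<in> G" and f: "f = embed (Free i g)" by blast
  then show "f \<in> free_type"
    using free_type_act_closed free_enum_mem[OF i(1)] by (simp add: embed_def free_reps_def)
next
  fix f assume f: "f \<in> free_type"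
  then have fX: "f \<in> X" by (simp add: free_type_def)
  obtain g where g: "g \<in> G" and rep: "orbit_rep f = act g f"
    using orbit_rep_mem[OF fX] by (auto simp: orbit_def)
  have "orbit_rep f \<in> free_enum ` {0..<N2}"
    using bij_betw_imp_surj_on[OF bij_free_enum] orbit_rep_free_reps[OF f] by simp
  then obtain i where i: "i < N2" "free_enum i = orbit_rep f" by auto
  have "embed (Free i (inv\<^bsub>D\<^esub> g)) = f"
    using i rep coind_act_inv_cancel[OF fX g] by (simp add: embed_def)
  then show "f \<in> embed ` {Free i g | i g. i < N2 \<and> g \<in> G}"
    using i(1) g by blast
qed

lemma bij_embed: "bij_betw embed Y X"
proof -
  have "X = {const_map a, const_map b} \<union> coset_type \<union> free_type"
    using const_map_mem by (auto simp: free_type_def coset_type_def)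
  moreover have "({const_map a, const_map b} \<union> coset_type) \<inter> free_type = {}"
    by (auto simp: free_type_def)
  ultimately show ?thesis
    unfolding coprod_set_def
    using bij_betw_combine[OF bij_betw_combine[OF bij_embed_points
          bij_betw_imageI[OF inj_on_embed_cosets embed_image_cosets]]
        bij_betw_imageI[OF inj_on_embed_free embed_image_free]]
      const_map_notin_coset_type by simp
qed

lemma embed_equivariant:
  assumes y: "y \<in> Y" and h: "h \<in> G"
  shows "embed (coprod_act p h y) = act h (embed y)"
  using y
proof (cases rule: coprod_set_cases)
  case (3 i C)
  obtain g where g: "g \<in> C" using left_cosets_D2_nonempty[OF 3(3)] by blast
  have gG: "g \<in> G" using g left_cosets_D2_subset[OF 3(3)] by blast
  have "h \<otimes>\<^bsub>D\<^esub> g \<in> h <#\<^bsub>D\<^esub> C" using g by (auto simp: l_coset_def)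
  then have "embed (coprod_act p h y) = act (h \<otimes>\<^bsub>D\<^esub> g) (tau_enum i)"
    using embed_Cos[OF 3(2) left_coset_left_cosets_D2[OF h 3(3)]] 3(1) by simp
  also have "\<dots> = act h (act g (tau_enum i))"
    by (rule coind_act_mult[OF gG h, symmetric])
  finally show ?thesis
    using embed_Cos[OF 3(2,3) g] 3(1) by simp
qed (auto simp: embed_def coind_act_const_map h coind_act_mult)

end

theorem lemma8p4:
  fixes p :: nat and a b :: 'a
  assumes "prime p" and "odd p" and "a \<noteq> b"
  shows "\<exists>\<psi>. bij_betw \<psi> (coind_set p a b)
              (coprod_set p (2 ^ ((p + 1) div 2) - 2)
                            ((2 ^ (p - 1) - 1) div p + 1 - 2 ^ ((p - 1) div 2)))
           \<and> (\<forall>h \<in> carrier (dihedral p). \<forall>f \<in> coind_set p a b.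
                 \<psi> (coind_act p h f) = coprod_act p h (\<psi> f))"
proof -
  interpret coind_dihedral_odd_prime p a b
    using assms by unfold_locales (simp_all add: prime_gt_0_nat)
  have "finite nonconst_tau_fixed" "finite free_reps"
    using finite_coind_set by (auto intro: finite_subset simp: nonconst_tau_fixed_def tau_fixed_def
        free_reps_def free_type_def)
  then obtain tau_enum free_enum
    where "bij_betw tau_enum {0..<card nonconst_tau_fixed} nonconst_tau_fixed"
      and "bij_betw free_enum {0..<card free_reps} free_reps"
    using ex_bij_betw_nat_finite by metis
  then interpret coind_decomposition p a b tau_enum free_enum "card nonconst_tau_fixed" "card free_reps"
    by unfold_locales
  have "(p + 1) div 2 = q + 1" using p_eq by simp
  have "card {a, b} = 2" using a_ne_b by simp
  then have "2 ^ p = card (coprod_set p (card nonconst_tau_fixed) (card free_reps))"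
    using bij_betw_same_card[OF bij_embed] card_coind_set by simp
  also have "\<dots> = 2 + (2 ^ (q + 1) - 2) * p + card free_reps * (2 * p)"
    using card_nonconst_tau_fixed \<open>(p + 1) div 2 = q + 1\<close> by (simp only: card_coprod_set)
  finally have free_count: "card free_reps = (2 ^ (p - 1) - 1) div p + 1 - 2 ^ ((p - 1) div 2)"
    by (fact solve_orbit_count_equation[OF p_eq])
  have "\<exists>\<psi>. bij_betw \<psi> X Y \<and> (\<forall>h\<in>G. \<forall>f\<in>X. \<psi> (act h f) = coprod_act p h (\<psi> f))"
    by (rule inverse_equivariant_bij[OF bij_embed]) (simp_all add: coprod_act_closed embed_equivariant)
  then show ?thesis
    unfolding card_nonconst_tau_fixed free_count .
qed

end
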